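(* Let $(\widetilde M,\tilde p)$ be a non-compact model surface of revolution with metric $dt^2+f(t)^2d\theta^2$, where $f''(t)+G(t)f(t)=0$, $f(0)=0$, $f'(0)=1$. If $\widetilde M$ admits a finite total curvature $c(\widetilde M)<2\pi$, then the solution $m$ of $m''(t)+G_-(t)m(t)=0$ with $m(0)=0$, $m'(0)=1$, where $G_-:=\min\{G,0\}$, defines a non-compact model surface of revolution $(M^*,p^* )$ with metric $dt^2+m(t)^2d\theta^2$ which admits a finite total curvature.
   Context: A non-compact model surface of revolution is $\mathbb{R}^2$ with the metric $dt^2+h(t)^2d\theta^2$, where $(t,\theta)$ are polar coordinates about the origin and $h:(0,\infty)\to(0,\infty)$ extends to an odd function around $0$ with $h'(0)=1$; its Gauss curvature is $-h''/h$. The total curvature of a surface with Gauss curvature $G$ is $\int G_+\,dA+\int G_-\,dA$ ($G_+=\max\{G,0\}$, $G_-=\min\{G,0\}$, $dA=h(t)\,dt\,d\theta$), and it is finite if both integrals are finite. *)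

theory Defs
  imports "HOL-Analysis.Analysis"
begin

definition C2 :: "(real \<Rightarrow> real) \<Rightarrow> bool" where
  "C2 h \<longleftrightarrow> (\<forall>t. h differentiable (at t)) \<and> (\<forall>t. deriv h differentiable (at t))
            \<and> continuous_on UNIV (deriv (deriv h))"

text \<open>Warping function of a non-compact model surface of revolution
  (metric dt^2 + h(t)^2 dtheta^2 on R^2, polar coordinates about the origin).
  The function h is given on all of R and required to be the odd extension:
  odd, positive on (0,inf), h'(0) = 1, twice continuously differentiable.\<close>
definition model_surface :: "(real \<Rightarrow> real) \<Rightarrow> bool" where
  "model_surface h \<longleftrightarrow> C2 h \<and> (\<forall>t. h (- t) = - h t) \<and> deriv h 0 = 1
      \<and> (\<forall>t>0. h t > 0)"

definition gauss_curv :: "(real \<Rightarrow> real) \<Rightarrow> real \<Rightarrow> real" where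
  "gauss_curv h t = - deriv (deriv h) t / h t"

text \<open>Integrals of G_+ dA and G_- dA with dA = h dt dtheta, t in (0,inf),
  theta in [0,2pi); the theta-integration contributes the factor 2 pi.\<close>
definition pos_curv_integral :: "(real \<Rightarrow> real) \<Rightarrow> real" where
  "pos_curv_integral h = 2 * pi * (LINT t:{0<..}|lborel. max (gauss_curv h t) 0 * h t)"

definition neg_curv_integral :: "(real \<Rightarrow> real) \<Rightarrow> real" where
  "neg_curv_integral h = 2 * pi * (LINT t:{0<..}|lborel. min (gauss_curv h t) 0 * h t)"

definition finite_total_curvature :: "(real \<Rightarrow> real) \<Rightarrow> bool" where
  "finite_total_curvature h \<longleftrightarrow>
     set_integrable lborel {0<..} (\<lambda>t. max (gauss_curv h t) 0 * h t) \<and>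
     set_integrable lborel {0<..} (\<lambda>t. min (gauss_curv h t) 0 * h t)"

definition total_curvature :: "(real \<Rightarrow> real) \<Rightarrow> real" where
  "total_curvature h = pos_curv_integral h + neg_curv_integral h"

end

theory Submission
  imports Defs
begin

(* Let f'' + G f = 0 describe a model surface whose total curvature c is finite and smaller
   than 2 pi, and let m solve the Jacobi equation m'' = q m for the negative part of the
   curvature, q = -min(G,0) >= 0, with m(0) = 0 and m'(0) = 1.

   1. Symmetry: f is odd, so G and q are even; by uniqueness for linear second order
      equations (a Gronwall energy estimate) m is then odd.
   2. Convexity: as q >= 0, m is positive on (0,inf), m' increases from 1, and m(t) <= t m'(t);
      together with 1. this makes m the warping function of a model surface.
   3. Integrating -f'' = K f gives f'(t) -> 1 - c/(2 pi) > 0 (a Cohn-Vossen type identity),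
      hence f(t) >= c' t for large t and some c' > 0.
   4. Bounded slope: (ln m')' = q m / m' <= t q <= q f / c', and q f is integrable because the
      negative curvature part of f is; so m' is bounded on [0,inf).
   5. Finally q m = m'' >= 0 has the bounded primitive m', so q m is integrable: the surface of
      m, whose curvature is -q <= 0, has finite total curvature. *)

lemma C2_derivatives:
  assumes "C2 h"
  shows "(h has_real_derivative deriv h t) (at t)"
    and "(deriv h has_real_derivative deriv (deriv h) t) (at t)"
  using assms unfolding C2_def by (auto simp: DERIV_deriv_iff_real_differentiable)

lemma continuous_on_if_derivatives:
  assumes "\<And>t. (h has_real_derivative h' t) (at t)"
  shows "continuous_on UNIV h"
  using assms by (meson DERIV_isCont continuous_at_imp_continuous_on)

lemma has_real_derivative_imp_vector_derivative_within:
  "(F has_real_derivative d) (at x) \<Longrightarrow> (F has_vector_derivative d) (at x within S)"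
  by (simp add: has_real_derivative_iff_has_vector_derivative has_vector_derivative_at_within)

lemma deriv_of_reflection_symmetric:
  assumes h_diff: "\<And>x. (h has_real_derivative deriv h x) (at x)"
    and sym: "\<And>x. h (- x) = s * h x"
  shows "deriv h (- t) = - s * deriv h t"
proof -
  have "((\<lambda>x. h (- x)) has_real_derivative - deriv h (- t)) (at t)"
    using h_diff[of "- t"] DERIV_mirror by blast
  moreover have "(\<lambda>x. h (- x)) = (\<lambda>x. s * h x)" using sym by auto
  ultimately have "((\<lambda>x. s * h x) has_real_derivative - deriv h (- t)) (at t)" by simp
  moreover have "((\<lambda>x. s * h x) has_real_derivative s * deriv h t) (at t)"
    using h_diff[of t] by (rule DERIV_cmult)
  ultimately show ?thesis using DERIV_unique by force
qed

lemma gronwall_vanishing: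
  fixes E E' :: "real \<Rightarrow> real"
  assumes "0 \<le> T"
    and dE: "\<And>x. x \<in> {0..T} \<Longrightarrow> (E has_real_derivative E' x) (at x)"
    and growth: "\<And>x. x \<in> {0..T} \<Longrightarrow> E' x \<le> C * E x"
    and E0: "E 0 = 0" and E_nonneg: "E T \<ge> 0"
  shows "E T = 0"
proof -
  define F where "F x = E x * exp (- C * x)" for x
  have "F T \<le> F 0"
  proof (rule DERIV_nonpos_imp_nonincreasing[OF \<open>0 \<le> T\<close>])
    fix x assume x: "0 \<le> x" "x \<le> T"
    have "(F has_real_derivative (E' x - C * E x) * exp (- C * x)) (at x)"
      unfolding F_def using x by (auto intro!: derivative_eq_intros dE simp: algebra_simps)
    moreover have "(E' x - C * E x) * exp (- C * x) \<le> 0"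
      using growth[of x] x by (intro mult_nonpos_nonneg) auto
    ultimately show "\<exists>y. DERIV F x :> y \<and> y \<le> 0" by blast
  qed
  then have "E T \<le> 0" by (simp add: F_def E0 mult_le_0_iff)
  with E_nonneg show ?thesis by simp
qed

text \<open>Uniqueness for the linear equation w'' = r w: with zero initial data the solution
  vanishes.  The energy w^2 + w'^2 satisfies the hypotheses of Gronwall's inequality.\<close>
lemma linear_ode_vanishing_right:
  fixes w v r :: "real \<Rightarrow> real"
  assumes dw: "\<And>t. (w has_real_derivative v t) (at t)"
    and dv: "\<And>t. (v has_real_derivative r t * w t) (at t)"
    and r_cont: "continuous_on UNIV r" and w0: "w 0 = 0" and v0: "v 0 = 0"
    and "0 \<le> T"
  shows "w T = 0"
proof -
  obtain K where K: "\<And>x. x \<in> {0..T} \<Longrightarrow> \<bar>r x\<bar> \<le> K"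
    using compact_imp_bounded[OF compact_continuous_image[OF continuous_on_subset[OF r_cont]]]
    by (fastforce simp: bounded_iff)
  define E where "E x = (w x)\<^sup>2 + (v x)\<^sup>2" for x
  define E' where "E' x = 2 * w x * v x * (1 + r x)" for x
  have "E T = 0"
  proof (rule gronwall_vanishing[OF \<open>0 \<le> T\<close>, where E' = E' and C = "1 + \<bar>K\<bar>"])
    show "(E has_real_derivative E' x) (at x)" for x
      unfolding E_def E'_def by (auto intro!: derivative_eq_intros dw dv simp: algebra_simps)
    fix x assume x: "x \<in> {0..T}"
    have "E' x \<le> \<bar>2 * w x * v x\<bar> * \<bar>1 + r x\<bar>"
      unfolding E'_def by (metis abs_ge_self abs_mult)
    also have "\<dots> \<le> E x * (1 + \<bar>K\<bar>)"
    proof (rule mult_mono)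
      show "\<bar>2 * w x * v x\<bar> \<le> E x"
        using sum_squares_bound[of "\<bar>w x\<bar>" "\<bar>v x\<bar>"] by (simp add: E_def abs_mult)
      show "\<bar>1 + r x\<bar> \<le> 1 + \<bar>K\<bar>" using K[OF x] by linarith
    qed (auto simp: E_def)
    finally show "E' x \<le> (1 + \<bar>K\<bar>) * E x" by (simp add: mult.commute)
  qed (auto simp: E_def w0 v0)
  then show ?thesis by (simp add: E_def add_nonneg_eq_0_iff)
qed

lemma linear_ode_vanishing:
  fixes w v r :: "real \<Rightarrow> real"
  assumes dw: "\<And>t. (w has_real_derivative v t) (at t)"
    and dv: "\<And>t. (v has_real_derivative r t * w t) (at t)"
    and r_cont: "continuous_on UNIV r" and w0: "w 0 = 0" and v0: "v 0 = 0"
  shows "w t = 0"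
proof (cases "0 \<le> t")
  case True
  then show ?thesis by (rule linear_ode_vanishing_right[OF dw dv r_cont w0 v0])
next
  case False
  have "w (- (- t)) = 0"
  proof (rule linear_ode_vanishing_right[where w = "\<lambda>x. w (- x)" and v = "\<lambda>x. - v (- x)"
        and r = "\<lambda>x. r (- x)" and T = "- t"])
    show "((\<lambda>x. w (- x)) has_real_derivative - v (- x)) (at x)" for x
      using dw[of "- x"] DERIV_mirror by blast
    show "((\<lambda>x. - v (- x)) has_real_derivative r (- x) * w (- x)) (at x)" for x
      using DERIV_minus[OF iffD1[OF DERIV_mirror dv[of "- x"]]] by simp
    show "continuous_on UNIV (\<lambda>x. r (- x))"
      by (intro continuous_on_compose2[OF r_cont] continuous_intros) auto
  qed (use False w0 v0 in auto)
  then show ?thesis by simp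
qed

text \<open>A solution of m'' = r m with even coefficient and m(0) = 0 is odd: m(t) + m(-t) solves
  the same equation with zero initial data.\<close>
lemma odd_solution:
  fixes m m' r :: "real \<Rightarrow> real"
  assumes dm: "\<And>t. (m has_real_derivative m' t) (at t)"
    and dm': "\<And>t. (m' has_real_derivative r t * m t) (at t)"
    and r_cont: "continuous_on UNIV r" and r_even: "\<And>t. r (- t) = r t"
    and m0: "m 0 = 0"
  shows "m (- t) = - m t"
proof -
  have "m t + m (- t) = 0"
  proof (rule linear_ode_vanishing[where w = "\<lambda>x. m x + m (- x)" and v = "\<lambda>x. m' x - m' (- x)"])
    show "((\<lambda>x. m x + m (- x)) has_real_derivative m' x - m' (- x)) (at x)" for x
      using DERIV_add[OF dm[of x] iffD1[OF DERIV_mirror dm[of "- x"]]] by simp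
    show "((\<lambda>x. m' x - m' (- x)) has_real_derivative r x * (m x + m (- x))) (at x)" for x
      using DERIV_diff[OF dm'[of x] iffD1[OF DERIV_mirror dm'[of "- x"]]]
      by (simp add: r_even algebra_simps)
  qed (use r_cont m0 in auto)
  then show ?thesis by simp
qed

lemma model_surface_second_derivative_odd:
  assumes "model_surface f"
  shows "deriv (deriv f) (- t) = - deriv (deriv f) t"
proof -
  have f_C2: "C2 f" and f_odd: "\<And>t. f (- t) = - 1 * f t"
    using assms unfolding model_surface_def by auto
  have f'_even: "deriv f (- t) = 1 * deriv f t" for t
    using deriv_of_reflection_symmetric[OF C2_derivatives(1)[OF f_C2] f_odd] by simp
  show ?thesis
    using deriv_of_reflection_symmetric[OF C2_derivatives(2)[OF f_C2] f'_even] by simp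
qed

lemma coefficient_even:
  fixes f G :: "real \<Rightarrow> real"
  assumes f_model: "model_surface f" and f_eq: "\<And>t. deriv (deriv f) t + G t * f t = 0"
  shows "G (- t) = G t"
proof -
  have f_odd: "\<And>t. f (- t) = - f t" and f_pos: "\<And>t. 0 < t \<Longrightarrow> 0 < f t"
    using f_model unfolding model_surface_def by auto
  note f''_odd = model_surface_second_derivative_odd[OF f_model]
  have pos_case: "G (- t) = G t" if "0 < t" for t
  proof -
    have "G (- t) * f t = - deriv (deriv f) t"
      using f_eq[of "- t"] f''_odd[of t] f_odd[of t] by simp
    also have "\<dots> = G t * f t" using f_eq[of t] by linarith
    finally have "G (- t) * f t = G t * f t" .
    then show ?thesis using f_pos[OF that] by simp
  qed
  show ?thesis using pos_case[of t] pos_case[of "- t"] by (cases "0 < t"; cases "t = 0") auto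
qed

lemma mono_bounded_tendsto_Sup:
  fixes g :: "real \<Rightarrow> real"
  assumes mono: "\<And>x y. 0 \<le> x \<Longrightarrow> x \<le> y \<Longrightarrow> g x \<le> g y" and bdd: "bdd_above (g ` {0..})"
  shows "(g \<longlongrightarrow> Sup (g ` {0..})) at_top"
proof (rule increasing_tendsto)
  show "\<forall>\<^sub>F x in at_top. g x \<le> Sup (g ` {0..})"
    unfolding eventually_at_top_linorder by (intro exI[of _ 0] allI impI cSup_upper bdd) auto
  fix l assume "l < Sup (g ` {0..})"
  then obtain y where "0 \<le> y" "l < g y" using less_cSup_iff[OF _ bdd] by force
  then show "\<forall>\<^sub>F x in at_top. l < g x"
    unfolding eventually_at_top_linorder using mono by (meson order_less_le_trans)
qed

lemma integrable_of_bounded_primitive: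
  fixes F h :: "real \<Rightarrow> real"
  assumes dF: "\<And>x. (F has_real_derivative h x) (at x)" and h_cont: "continuous_on UNIV h"
    and h_nonneg: "\<And>x. 0 \<le> x \<Longrightarrow> 0 \<le> h x" and bdd: "bdd_above (F ` {0..})"
  shows "set_integrable lborel {0<..} h"
proof -
  have F_mono: "F x \<le> F y" if "0 \<le> x" "x \<le> y" for x y
    by (rule DERIV_nonneg_imp_nondecreasing[OF that(2)]) (use dF h_nonneg that in force)
  have "set_integrable lborel (einterval (ereal 0) \<infinity>) h"
  proof (rule interval_integral_FTC_nonneg(1)[OF _ dF, where A = "F 0" and B = "Sup (F ` {0..})"])
    show "isCont h x" for x using h_cont by (simp add: continuous_on_eq_continuous_at)
    show "AE x in lborel. ereal 0 < ereal x \<longrightarrow> ereal x < \<infinity> \<longrightarrow> 0 \<le> h x"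
      using h_nonneg by auto
    show "((F \<circ> real_of_ereal) \<longlongrightarrow> F 0) (at_right (ereal 0))"
      unfolding ereal_tendsto_simps1
      using DERIV_isCont[OF dF[of 0]] unfolding isCont_def by (rule tendsto_within_subset) simp
    show "((F \<circ> real_of_ereal) \<longlongrightarrow> Sup (F ` {0..})) (at_left \<infinity>)"
      unfolding ereal_tendsto_simps1 by (rule mono_bounded_tendsto_Sup[OF F_mono bdd])
  qed auto
  then show ?thesis by (simp add: einterval_def greaterThan_def)
qed

lemma first_nonpositive_point:
  fixes m :: "real \<Rightarrow> real"
  assumes m_cont: "continuous_on UNIV m"
    and "0 < d" and init_pos: "\<And>x. 0 < x \<Longrightarrow> x < d \<Longrightarrow> 0 < m x"
    and "0 < t1" and "m t1 \<le> 0"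
  obtains s where "0 < s" "m s \<le> 0" "\<And>x. 0 < x \<Longrightarrow> x < s \<Longrightarrow> 0 < m x"
proof -
  define Z where "Z = {t. d \<le> t} \<inter> {t. m t \<le> 0}"
  have "closed Z"
    unfolding Z_def by (intro closed_Int closed_Collect_le continuous_intros m_cont)
  moreover have "t1 \<in> Z"
    using init_pos[of t1] assms(4,5) by (force simp: Z_def)
  moreover have Z_bdd: "bdd_below Z" unfolding Z_def by (auto intro: bdd_belowI[of _ d])
  ultimately have "Inf Z \<in> Z" using closed_contains_Inf by blast
  show thesis
  proof
    show "0 < Inf Z" "m (Inf Z) \<le> 0" using \<open>Inf Z \<in> Z\<close> \<open>0 < d\<close> by (auto simp: Z_def)
    fix x assume x: "0 < x" "x < Inf Z"
    show "0 < m x"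
    proof (cases "x < d")
      case True then show ?thesis using init_pos x by simp
    next
      case False
      have "x \<notin> Z" using x cInf_lower[OF _ Z_bdd, of x] by auto
      with False show ?thesis by (auto simp: Z_def)
    qed
  qed
qed

locale convex_solution =
  fixes m m' q :: "real \<Rightarrow> real"
  assumes dm: "\<And>t. (m has_real_derivative m' t) (at t)"
    and dm': "\<And>t. (m' has_real_derivative q t * m t) (at t)"
    and q_nonneg: "\<And>t. 0 \<le> q t"
    and m0: "m 0 = 0" and m'0: "m' 0 = 1"
begin

lemma m_cont: "continuous_on UNIV m"
  by (rule continuous_on_if_derivatives[OF dm])

text \<open>As long as m stays nonnegative, m'' = q m >= 0, so the slope increases.\<close>
lemma slope_mono_while_nonneg:
  assumes "0 \<le> x" "x \<le> y" "\<And>z. 0 \<le> z \<Longrightarrow> z \<le> y \<Longrightarrow> 0 \<le> m z"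
  shows "m' x \<le> m' y"
  by (rule DERIV_nonneg_imp_nondecreasing[OF assms(2)])
     (use dm' q_nonneg assms in \<open>meson mult_nonneg_nonneg order_trans\<close>)

text \<open>The solution never returns to 0: before its first zero s the slope is at least 1, so
  m(s) >= s > 0 by the mean value theorem.\<close>
lemma solution_pos: "0 < t \<Longrightarrow> 0 < m t"
proof (rule ccontr)
  assume "0 < t" "\<not> 0 < m t"
  obtain d where "0 < d" "\<And>h. 0 < h \<Longrightarrow> h < d \<Longrightarrow> m 0 < m (0 + h)"
    using DERIV_pos_inc_right[OF dm[of 0]] m'0 by auto
  then obtain s where s: "0 < s" "m s \<le> 0" and pos: "\<And>x. 0 < x \<Longrightarrow> x < s \<Longrightarrow> 0 < m x"
    using first_nonpositive_point[OF m_cont, of d t] \<open>0 < t\<close> \<open>\<not> 0 < m t\<close> m0 by auto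
  obtain l z where z: "0 < z" "z < s" "DERIV m z :> l" "m s - m 0 = (s - 0) * l"
    using MVT[OF \<open>0 < s\<close>, of m] continuous_on_subset[OF m_cont] dm real_differentiable_def
    by blast
  have "1 \<le> m' z"
    using slope_mono_while_nonneg[of 0 z] pos z m0 m'0 by (force simp: le_less)
  moreover have "l = m' z" using DERIV_unique[OF z(3) dm[of z]] .
  ultimately have "s \<le> m s" using z m0 by (simp add: mult_le_cancel_left1)
  with s show False by simp
qed

lemma curvature_term_nonneg: "0 \<le> t \<Longrightarrow> 0 \<le> q t * m t"
  using solution_pos[of t] q_nonneg[of t] m0 by (cases "t = 0") auto

lemma slope_mono: "0 \<le> x \<Longrightarrow> x \<le> y \<Longrightarrow> m' x \<le> m' y"
  using slope_mono_while_nonneg solution_pos m0 by (metis le_less)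

lemma slope_ge_one: "0 \<le> x \<Longrightarrow> 1 \<le> m' x"
  using slope_mono[of 0 x] m'0 by simp

text \<open>By convexity the graph of m on [0,x] lies below its tangent line at x.\<close>
lemma below_tangent:
  assumes "0 \<le> x"
  shows "m x \<le> x * m' x"
proof -
  have "0 * m' 0 - m 0 \<le> x * m' x - m x"
  proof (rule DERIV_nonneg_imp_nondecreasing[OF assms])
    fix y assume y: "0 \<le> y" "y \<le> x"
    have "((\<lambda>x. x * m' x - m x) has_real_derivative y * (q y * m y)) (at y)"
      using dm dm' by (auto intro!: derivative_eq_intros)
    then show "\<exists>z. ((\<lambda>x. x * m' x - m x) has_real_derivative z) (at y) \<and> 0 \<le> z"
      using curvature_term_nonneg[of y] y by auto
  qed
  then show ?thesis using m0 by simp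
qed

text \<open>The logarithmic derivative of m' is q m / m' <= t q, which controls the growth of m'.\<close>
lemma log_slope_bound:
  assumes q_cont: "continuous_on UNIV q" and "0 \<le> a" "a \<le> b"
  shows "ln (m' b) - ln (m' a) \<le> integral {a..b} (\<lambda>x. x * q x)"
proof -
  have slope_pos: "0 < m' x" if "x \<in> {a..b}" for x
    using slope_ge_one[of x] that \<open>0 \<le> a\<close> by auto
  have "((\<lambda>x. q x * m x / m' x) has_integral ln (m' b) - ln (m' a)) {a..b}"
  proof (rule fundamental_theorem_of_calculus[OF \<open>a \<le> b\<close>])
    fix x assume "x \<in> {a..b}"
    then have "((\<lambda>x. ln (m' x)) has_real_derivative q x * m x / m' x) (at x)"
      using dm'[of x] slope_pos by (auto intro!: derivative_eq_intros simp: field_simps)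
    then show "((\<lambda>x. ln (m' x)) has_vector_derivative q x * m x / m' x) (at x within {a..b})"
      by (rule has_real_derivative_imp_vector_derivative_within)
  qed
  moreover have "((\<lambda>x. x * q x) has_integral integral {a..b} (\<lambda>x. x * q x)) {a..b}"
    by (intro integrable_integral integrable_continuous_interval continuous_intros
        continuous_on_subset[OF q_cont]) auto
  moreover have "q x * m x / m' x \<le> x * q x" if "x \<in> {a..b}" for x
  proof -
    have "q x * m x \<le> q x * (x * m' x)"
      using below_tangent[of x] q_nonneg[of x] that \<open>0 \<le> a\<close> by (intro mult_left_mono) auto
    then show ?thesis using slope_pos[OF that] by (simp add: divide_simps algebra_simps)
  qed
  ultimately show ?thesis by (rule has_integral_le)
qed

lemma slope_bounded:
  assumes q_cont: "continuous_on UNIV q" and "0 \<le> a"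
    and weighted_bound: "\<And>b. a \<le> b \<Longrightarrow> integral {a..b} (\<lambda>x. x * q x) \<le> B"
  shows "bdd_above (m' ` {0..})"
proof (rule bdd_aboveI2)
  fix x :: real assume "x \<in> {0..}"
  show "m' x \<le> max (m' a) (m' a * exp B)"
  proof (cases "x \<le> a")
    case True then show ?thesis using slope_mono[of x a] \<open>x \<in> {0..}\<close> by simp
  next
    case False
    have "ln (m' x) \<le> ln (m' a) + B"
      using log_slope_bound[OF q_cont \<open>0 \<le> a\<close>, of x] weighted_bound[of x] False by simp
    then have "exp (ln (m' x)) \<le> exp (ln (m' a) + B)" by simp
    moreover have "0 < m' x" "0 < m' a" using slope_ge_one \<open>0 \<le> a\<close> \<open>x \<in> {0..}\<close> by force+
    ultimately show ?thesis by (simp add: exp_add)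
  qed
qed

end

lemma gauss_curv_times_warping:
  assumes "h t \<noteq> 0"
  shows "gauss_curv h t * h t = - deriv (deriv h) t"
  using assms by (simp add: gauss_curv_def)

lemma gauss_curv_of_solution:
  assumes h_eq: "deriv (deriv h) t + k t * h t = 0" and "h t \<noteq> 0"
  shows "gauss_curv h t = k t"
  using gauss_curv_times_warping[of h t] h_eq \<open>h t \<noteq> 0\<close>
  by (metis add.commute add_eq_0_iff2 mult_cancel_right)

text \<open>On a model surface K f = -f'' for t > 0, and f''(0) = 0; so finite total curvature c
  means that -f'' is integrable over [0,inf) with integral c / (2 pi).\<close>
lemma total_curvature_as_integral:
  fixes f :: "real \<Rightarrow> real"
  assumes f_model: "model_surface f" and fin: "finite_total_curvature f"
  shows "set_integrable lborel {0..} (\<lambda>x. - deriv (deriv f) x)"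
    and "(LINT x:{0..}|lborel. - deriv (deriv f) x) = total_curvature f / (2 * pi)"
proof -
  have f_pos: "\<And>t. 0 < t \<Longrightarrow> 0 < f t"
    using f_model unfolding model_surface_def by auto
  have f''0: "deriv (deriv f) 0 = 0"
    using model_surface_second_derivative_odd[OF f_model, of 0] by simp
  define pos where "pos x = max (gauss_curv f x) 0 * f x" for x
  define neg where "neg x = min (gauss_curv f x) 0 * f x" for x
  have split: "indicator {0..} x *\<^sub>R (- deriv (deriv f) x)
      = indicator {0<..} x *\<^sub>R pos x + indicator {0<..} x *\<^sub>R neg x" for x
  proof (cases "0 < x")
    case True
    have "pos x + neg x = gauss_curv f x * f x"
      unfolding pos_def neg_def by (simp add: max_def min_def algebra_simps)
    then show ?thesis using True f_pos[OF True] gauss_curv_times_warping[of f x] by simp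
  qed (auto simp: f''0 indicator_def)
  have pos_int: "integrable lborel (\<lambda>x. indicator {0<..} x *\<^sub>R pos x)"
    and neg_int: "integrable lborel (\<lambda>x. indicator {0<..} x *\<^sub>R neg x)"
    using fin unfolding finite_total_curvature_def set_integrable_def pos_def neg_def by auto
  show "set_integrable lborel {0..} (\<lambda>x. - deriv (deriv f) x)"
    unfolding set_integrable_def split using pos_int neg_int by (rule Bochner_Integration.integrable_add)
  have "(LINT x:{0..}|lborel. - deriv (deriv f) x)
      = (LINT x:{0<..}|lborel. pos x) + (LINT x:{0<..}|lborel. neg x)"
    unfolding set_lebesgue_integral_def split
    using pos_int neg_int by (rule Bochner_Integration.integral_add)
  then show "(LINT x:{0..}|lborel. - deriv (deriv f) x) = total_curvature f / (2 * pi)"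
    by (simp add: total_curvature_def pos_curv_integral_def neg_curv_integral_def pos_def neg_def
        field_simps)
qed

text \<open>Integrating -f'' = K f from 0 to infinity (a Cohn-Vossen type identity): on a model surface
  of finite total curvature c the slope f' tends to 1 - c / (2 pi).\<close>
lemma slope_limit_total_curvature:
  fixes f :: "real \<Rightarrow> real"
  assumes f_model: "model_surface f" and fin: "finite_total_curvature f"
  shows "(deriv f \<longlongrightarrow> 1 - total_curvature f / (2 * pi)) at_top"
proof -
  have f_C2: "C2 f" and f'0: "deriv f 0 = 1"
    using f_model unfolding model_surface_def by auto
  define g where "g x = - deriv (deriv f) x" for x
  have g_cont: "continuous_on UNIV g"
    using f_C2 unfolding C2_def g_def[abs_def] by (auto intro: continuous_on_minus)
  have ftc: "(LINT x:{0..b}|lborel. g x) = 1 - deriv f b" if "0 \<le> b" for b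
  proof -
    have "(LINT x:{0..b}|lborel. g x) = (LBINT x=ereal 0..ereal b. g x)"
      using interval_integral_Icc[OF that, of g] by simp
    also have "\<dots> = - deriv f b - (- deriv f 0)"
    proof (rule interval_integral_FTC_finite[where F = "\<lambda>x. - deriv f x"])
      show "continuous_on {min 0 b..max 0 b} g"
        using continuous_on_subset[OF g_cont] by blast
      show "((\<lambda>x. - deriv f x) has_vector_derivative g x) (at x within {min 0 b..max 0 b})" for x
        unfolding g_def
        by (rule has_real_derivative_imp_vector_derivative_within[OF DERIV_minus])
           (rule C2_derivatives(2)[OF f_C2])
    qed
    finally show ?thesis using f'0 by simp
  qed
  have "((\<lambda>b. LINT x:{0..b}|lborel. g x) \<longlongrightarrow> total_curvature f / (2 * pi)) at_top"
    using tendsto_set_lebesgue_integral_at_top[OF _ total_curvature_as_integral(1)[OF f_model fin]]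
      total_curvature_as_integral(2)[OF f_model fin]
    unfolding g_def by simp
  then have "((\<lambda>b. 1 - deriv f b) \<longlongrightarrow> total_curvature f / (2 * pi)) at_top"
    by (rule Lim_transform_eventually) (auto simp: eventually_at_top_linorder ftc intro!: exI[of _ 0])
  then have "((\<lambda>b. 1 - (1 - deriv f b)) \<longlongrightarrow> 1 - total_curvature f / (2 * pi)) at_top"
    by (intro tendsto_intros)
  then show ?thesis by simp
qed

lemma linear_growth_of_slope_limit:
  fixes f f' :: "real \<Rightarrow> real"
  assumes df: "\<And>x. (f has_real_derivative f' x) (at x)"
    and lim: "(f' \<longlongrightarrow> L) at_top" and "0 < L"
  obtains T where "0 < T" "\<And>x. T \<le> x \<Longrightarrow> L / 4 * x \<le> f x"
proof -
  obtain N where N: "\<And>x. N \<le> x \<Longrightarrow> L / 2 < f' x"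
    using order_tendstoD(1)[OF lim, of "L / 2"] \<open>0 < L\<close> by (auto simp: eventually_at_top_linorder)
  define T where "T = max 1 (max N (2 * N - 4 * f N / L))"
  show thesis
  proof
    show "0 < T" by (simp add: T_def)
    fix x assume "T \<le> x"
    have "f N - L / 2 * N \<le> f x - L / 2 * x"
    proof (rule DERIV_nonneg_imp_nondecreasing[of N x "\<lambda>x. f x - L / 2 * x"])
      show "N \<le> x" using \<open>T \<le> x\<close> by (simp add: T_def)
      fix y assume "N \<le> y" "y \<le> x"
      then show "\<exists>z. ((\<lambda>x. f x - L / 2 * x) has_real_derivative z) (at y) \<and> 0 \<le> z"
        using N[of y] df[of y] by (intro exI[of _ "f' y - L / 2 * 1"]) (auto intro!: derivative_eq_intros)
    qed
    moreover have "L / 4 * (2 * N - 4 * f N / L) \<le> L / 4 * x"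
      using \<open>T \<le> x\<close> \<open>0 < L\<close> by (intro mult_left_mono) (auto simp: T_def)
    moreover have "L / 4 * (2 * N - 4 * f N / L) = L / 2 * N - f N"
      using \<open>0 < L\<close> by (simp add: field_simps)
    ultimately show "L / 4 * x \<le> f x" by linarith
  qed
qed

lemma linear_growth_of_small_total_curvature:
  fixes f :: "real \<Rightarrow> real"
  assumes f_model: "model_surface f" and fin: "finite_total_curvature f"
    and small: "total_curvature f < 2 * pi"
  obtains c T where "0 < c" "0 < T" "\<And>x. T \<le> x \<Longrightarrow> c * x \<le> f x"
proof -
  have "0 < 1 - total_curvature f / (2 * pi)" using small by (simp add: field_simps)
  moreover have "\<And>x. (f has_real_derivative deriv f x) (at x)"
    using f_model unfolding model_surface_def by (auto intro: C2_derivatives(1))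
  ultimately show thesis
    using linear_growth_of_slope_limit[OF _ slope_limit_total_curvature[OF f_model fin]] that
    by (metis divide_pos_pos zero_less_numeral)
qed

lemma weighted_integral_bound:
  fixes q f :: "real \<Rightarrow> real"
  assumes q_cont: "continuous_on UNIV q" and f_cont: "continuous_on UNIV f"
    and q_nonneg: "\<And>x. 0 \<le> q x" and f_nonneg: "\<And>x. 0 < x \<Longrightarrow> 0 \<le> f x"
    and qf_int: "(\<lambda>x. q x * f x) integrable_on {0<..}"
    and "0 < c" "0 < T" and growth: "\<And>x. T \<le> x \<Longrightarrow> c * x \<le> f x"
  shows "integral {T..b} (\<lambda>x. x * q x) \<le> integral {0<..} (\<lambda>x. q x * f x) / c"
proof -
  have cont_int: "g integrable_on {T..b}" if "continuous_on UNIV g" for g :: "real \<Rightarrow> real"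
    using integrable_continuous_interval[OF continuous_on_subset[OF that]] by blast
  have "integral {T..b} (\<lambda>x. x * q x) \<le> integral {T..b} (\<lambda>x. q x * f x / c)"
  proof (rule integral_le)
    fix x assume "x \<in> {T..b}"
    then have "q x * (c * x) \<le> q x * f x"
      using growth q_nonneg by (intro mult_left_mono) auto
    then show "x * q x \<le> q x * f x / c" using \<open>0 < c\<close> by (simp add: field_simps)
  qed (use \<open>0 < c\<close> in \<open>auto intro!: cont_int continuous_intros q_cont f_cont\<close>)
  also have "\<dots> = integral {T..b} (\<lambda>x. q x * f x) / c" by simp
  also have "\<dots> \<le> integral {0<..} (\<lambda>x. q x * f x) / c"
  proof (intro divide_right_mono integral_subset_le)
    show "(\<lambda>x. q x * f x) integrable_on {T..b}" by (intro cont_int continuous_intros q_cont f_cont)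
  qed (use \<open>0 < T\<close> \<open>0 < c\<close> qf_int q_nonneg f_nonneg in auto)
  finally show ?thesis .
qed

lemma finite_total_curvature_of_nonpositive:
  fixes h q :: "real \<Rightarrow> real"
  assumes h_eq: "\<And>t. deriv (deriv h) t = q t * h t" and h_pos: "\<And>t. 0 < t \<Longrightarrow> 0 < h t"
    and q_nonneg: "\<And>t. 0 \<le> q t" and qh_int: "set_integrable lborel {0<..} (\<lambda>t. q t * h t)"
  shows "finite_total_curvature h"
proof -
  have K: "gauss_curv h t = - q t" if "0 < t" for t
    using gauss_curv_of_solution[of h t "\<lambda>t. - q t"] h_eq[of t] h_pos[OF that] by simp
  have "(\<lambda>t. indicator {0<..} t *\<^sub>R (max (gauss_curv h t) 0 * h t)) = (\<lambda>t. 0)"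
    by (auto simp: indicator_def K q_nonneg)
  moreover have "(\<lambda>t. indicator {0<..} t *\<^sub>R (min (gauss_curv h t) 0 * h t))
      = (\<lambda>t. - (indicator {0<..} t *\<^sub>R (q t * h t)))"
    by (auto simp: indicator_def K q_nonneg)
  ultimately show ?thesis
    using qh_int unfolding finite_total_curvature_def set_integrable_def by simp
qed

lemma negative_curvature_integrable:
  fixes f G :: "real \<Rightarrow> real"
  assumes fin: "finite_total_curvature f" and f_eq: "\<And>t. deriv (deriv f) t + G t * f t = 0"
    and f_pos: "\<And>t. 0 < t \<Longrightarrow> 0 < f t"
  shows "set_integrable lborel {0<..} (\<lambda>t. - min (G t) 0 * f t)"
proof -
  have K: "gauss_curv f t = G t" if "0 < t" for t
    using gauss_curv_of_solution[of f t G] f_eq[of t] f_pos[OF that] by simp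
  have "(\<lambda>t. indicator {0<..} t *\<^sub>R (- min (G t) 0 * f t))
      = (\<lambda>t. - (indicator {0<..} t *\<^sub>R (min (gauss_curv f t) 0 * f t)))"
    by (auto simp: indicator_def K)
  then show ?thesis
    using fin unfolding finite_total_curvature_def set_integrable_def by simp
qed

theorem lemma4p2:
  fixes f G m :: "real \<Rightarrow> real"
  assumes f_model: "model_surface f"
    and G_cont: "continuous_on UNIV G"
    and f_eq: "\<And>t. deriv (deriv f) t + G t * f t = 0"
    and fin: "finite_total_curvature f"
    and small: "total_curvature f < 2 * pi"
    and m_C2: "C2 m"
    and m_eq: "\<And>t. deriv (deriv m) t + min (G t) 0 * m t = 0"
    and m0: "m 0 = 0"
    and m'0: "deriv m 0 = 1"
  shows "model_surface m \<and> finite_total_curvature m"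
proof -
  define q where "q t = - min (G t) 0" for t
  have q_cont: "continuous_on UNIV q" unfolding q_def[abs_def] by (intro continuous_intros G_cont)
  have q_nonneg: "0 \<le> q t" for t by (simp add: q_def)
  have m_jacobi: "deriv (deriv m) t = q t * m t" for t
    using m_eq[of t] by (simp add: q_def algebra_simps)
  note dm = C2_derivatives(1)[OF m_C2]
  have dm': "(deriv m has_real_derivative q t * m t) (at t)" for t
    using C2_derivatives(2)[OF m_C2, of t] m_jacobi[of t] by simp
  interpret convex_solution m "deriv m" q
    by unfold_locales (use dm dm' q_nonneg m0 m'0 in auto)
  have "m (- t) = - m t" for t
    by (rule odd_solution[OF dm dm' q_cont _ m0]) (simp add: q_def coefficient_even[OF f_model f_eq])
  then have m_model: "model_surface m"
    using m_C2 m'0 solution_pos unfolding model_surface_def by auto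
  have f_C2: "C2 f" and f_pos: "\<And>t. 0 < t \<Longrightarrow> 0 < f t"
    using f_model unfolding model_surface_def by auto
  \<comment> \<open>linear growth of f and integrability of q f bound the slope of m\<close>
  obtain c T where "0 < c" "0 < T" "\<And>x. T \<le> x \<Longrightarrow> c * x \<le> f x"
    using linear_growth_of_small_total_curvature[OF f_model fin small] by blast
  moreover have "(\<lambda>t. q t * f t) integrable_on {0<..}"
    using set_borel_integral_eq_integral(1)[OF negative_curvature_integrable[OF fin f_eq f_pos]]
    by (simp add: q_def)
  ultimately have slope_bdd: "bdd_above (deriv m ` {0..})"
    using weighted_integral_bound[OF q_cont continuous_on_if_derivatives[OF C2_derivatives(1)[OF f_C2]]
        q_nonneg] f_pos
    by (intro slope_bounded[OF q_cont less_imp_le[OF \<open>0 < T\<close>]]) (auto simp: less_imp_le)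
  have "continuous_on UNIV (\<lambda>t. q t * m t)" by (intro continuous_intros q_cont m_cont)
  then have "set_integrable lborel {0<..} (\<lambda>t. q t * m t)"
    by (rule integrable_of_bounded_primitive[OF dm' _ curvature_term_nonneg slope_bdd])
  then have "finite_total_curvature m"
    using finite_total_curvature_of_nonpositive[OF m_jacobi solution_pos q_nonneg] by simp
  with m_model show ?thesis by blast
qed

end
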